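(* Let $F$ be a forest and $t$ a positive constant. Then there exists a matching $M$ of $F$ such that the threshold assignment $\tau$ defined by $\tau(w)=deg_F(w)$ if $w$ is saturated by $M$ and $\tau(w)=0$ otherwise satisfies $\overline{\tau}\le t$ and $Ldyn_t(F)=dyn_\tau(F)=|M|$.
   Context: A threshold assignment is a function $\tau:V(F)\to\{0,1,2,\dots\}$ with $\tau(v)\le deg_F(v)$ for every $v$; $\overline{\tau}=\sum_v\tau(v)/|V(F)|$. A set $D\subseteq V(F)$ is a $\tau$-dynamo if $V(F)$ can be partitioned into $D_0=D,D_1,\dots,D_k$ such that for each $1\le i\le k$, $D_i$ consists of all vertices not in $D_0\cup\dots\cup D_{i-1}$ having at least $\tau(v)$ neighbors in $D_0\cup\dots\cup D_{i-1}$; $dyn_\tau(F)$ is the minimum size of a $\tau$-dynamo. $Ldyn_t(F)=\max\{dyn_\tau(F):\overline{\tau}\le t\}$. *)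

theory Defs
  imports Complex_Main
begin

definition simple_graph :: "'a set \<Rightarrow> 'a set set \<Rightarrow> bool" where
  "simple_graph V E \<longleftrightarrow> finite V \<and>
     (\<forall>e\<in>E. \<exists>u v. e = {u, v} \<and> u \<noteq> v \<and> u \<in> V \<and> v \<in> V)"

definition is_cycle :: "'a set \<Rightarrow> 'a set set \<Rightarrow> 'a list \<Rightarrow> bool" where
  "is_cycle V E cs \<longleftrightarrow> length cs \<ge> 3 \<and> distinct cs \<and> set cs \<subseteq> V \<and>
     (\<forall>i < length cs. {cs ! i, cs ! ((i + 1) mod length cs)} \<in> E)"

definition forest :: "'a set \<Rightarrow> 'a set set \<Rightarrow> bool" where
  "forest V E \<longleftrightarrow> simple_graph V E \<and> (\<nexists>cs. is_cycle V E cs)"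

definition degree :: "'a set set \<Rightarrow> 'a \<Rightarrow> nat" where
  "degree E v = card {u. {u, v} \<in> E}"

definition matching :: "'a set set \<Rightarrow> 'a set set \<Rightarrow> bool" where
  "matching E M \<longleftrightarrow> M \<subseteq> E \<and> (\<forall>e1\<in>M. \<forall>e2\<in>M. e1 \<noteq> e2 \<longrightarrow> e1 \<inter> e2 = {})"

definition threshold_assignment :: "'a set \<Rightarrow> 'a set set \<Rightarrow> ('a \<Rightarrow> nat) \<Rightarrow> bool" where
  "threshold_assignment V E \<tau> \<longleftrightarrow> (\<forall>v\<in>V. \<tau> v \<le> degree E v)"

definition avg_threshold :: "'a set \<Rightarrow> ('a \<Rightarrow> nat) \<Rightarrow> real" where
  "avg_threshold V \<tau> = real (\<Sum>v\<in>V. \<tau> v) / real (card V)"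

definition spread_step :: "'a set \<Rightarrow> 'a set set \<Rightarrow> ('a \<Rightarrow> nat) \<Rightarrow> 'a set \<Rightarrow> 'a set" where
  "spread_step V E \<tau> S = S \<union> {v \<in> V - S. card {u \<in> S. {u, v} \<in> E} \<ge> \<tau> v}"

definition is_dynamo :: "'a set \<Rightarrow> 'a set set \<Rightarrow> ('a \<Rightarrow> nat) \<Rightarrow> 'a set \<Rightarrow> bool" where
  "is_dynamo V E \<tau> D \<longleftrightarrow> D \<subseteq> V \<and> (\<exists>k. (spread_step V E \<tau> ^^ k) D = V)"

definition dyn :: "'a set \<Rightarrow> 'a set set \<Rightarrow> ('a \<Rightarrow> nat) \<Rightarrow> nat" where
  "dyn V E \<tau> = Min {card D | D. is_dynamo V E \<tau> D}"

definition Ldyn :: "'a set \<Rightarrow> 'a set set \<Rightarrow> real \<Rightarrow> nat" where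
  "Ldyn V E t = Max {dyn V E \<tau> | \<tau>. threshold_assignment V E \<tau> \<and> avg_threshold V \<tau> \<le> t}"

end

theory Submission
  imports Defs
begin

text \<open>
  Take a matching \<open>M\<close> of maximum size among those whose saturated vertices have total degree
  at most \<open>t |V|\<close>; the corresponding \<open>\<tau>\<close> is then admissible. Since both endpoints of a
  matching edge need all their neighbours active, every \<open>\<tau>\<close>-dynamo meets every edge of
  \<open>M\<close>, so \<open>dyn \<tau> \<ge> |M|\<close>. Conversely, for an arbitrary threshold assignment \<open>\<sigma>\<close> of a
  forest, induction on the number of vertices yields a matching \<open>M'\<close> and a \<open>\<sigma>\<close>-dynamo of size
  at most \<open>|M'|\<close> whose saturated vertices have total degree at most \<open>\<Sum> \<sigma>\<close>: a vertex of
  threshold 0 is deleted (lowering its neighbours' thresholds); otherwise there is a leaf \<open>v\<close>,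
  necessarily of threshold 1, with neighbour \<open>u\<close>. If \<open>\<sigma> u = deg u\<close>, the edge \<open>uv\<close> joins
  the matching and \<open>u\<close> the dynamo and both are deleted; otherwise \<open>v\<close> alone is deleted, as it
  is activated by \<open>u\<close> anyway. When \<open>\<sigma>\<close> has average at most \<open>t\<close>, \<open>M'\<close> is within budget,
  so \<open>dyn \<sigma> \<le> |M'| \<le> |M|\<close>.
\<close>

lemma simple_graph_edgeD:
  assumes "simple_graph V E" and "{u, v} \<in> E"
  shows "u \<noteq> v" and "u \<in> V" and "v \<in> V"
proof -
  obtain a b where "{u, v} = {a, b}" "a \<noteq> b" "a \<in> V" "b \<in> V"
    using assms unfolding simple_graph_def by blast
  then have "u \<noteq> v \<and> u \<in> V \<and> v \<in> V" by (auto simp: doubleton_eq_iff)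
  then show "u \<noteq> v" "u \<in> V" "v \<in> V" by blast+
qed

lemma simple_graph_edge_subset:
  assumes "simple_graph V E" and "e \<in> E"
  shows "e \<subseteq> V"
proof -
  obtain u v where "e = {u, v}" "u \<in> V" "v \<in> V"
    using assms unfolding simple_graph_def by blast
  then show ?thesis by simp
qed

lemma simple_graph_finite_edges:
  assumes "simple_graph V E"
  shows "finite E"
proof -
  have "E \<subseteq> Pow V" using simple_graph_edge_subset[OF assms] by blast
  moreover have "finite V" using assms unfolding simple_graph_def by blast
  ultimately show ?thesis by (meson finite_Pow_iff finite_subset)
qed

lemma finite_neighbours_in:
  assumes "simple_graph V E"
  shows "finite {u \<in> S. {u, v} \<in> E}"
proof (rule finite_subset)
  show "{u \<in> S. {u, v} \<in> E} \<subseteq> V" using simple_graph_edgeD(2)[OF assms] by blast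
  show "finite V" using assms unfolding simple_graph_def by blast
qed

lemma finite_neighbours: "simple_graph V E \<Longrightarrow> finite {u. {u, v} \<in> E}"
  using finite_neighbours_in[of V E UNIV] by simp

definition activated :: "'a set \<Rightarrow> 'a set set \<Rightarrow> ('a \<Rightarrow> nat) \<Rightarrow> 'a set \<Rightarrow> 'a set" where
  "activated V E \<tau> D = (\<Union>k. (spread_step V E \<tau> ^^ k) D)"

lemma spread_step_iterate_mono:
  "j \<le> k \<Longrightarrow> (spread_step V E \<tau> ^^ j) D \<subseteq> (spread_step V E \<tau> ^^ k) D"
  by (rule lift_Suc_mono_le[of "\<lambda>k. (spread_step V E \<tau> ^^ k) D"]) (auto simp: spread_step_def)

lemma spread_step_iterate_subset: "D \<subseteq> V \<Longrightarrow> (spread_step V E \<tau> ^^ k) D \<subseteq> V"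
  by (induction k) (auto simp: spread_step_def)

lemma activated_base: "D \<subseteq> activated V E \<tau> D"
proof -
  have "(spread_step V E \<tau> ^^ 0) D \<subseteq> activated V E \<tau> D" unfolding activated_def by blast
  then show ?thesis by simp
qed

lemma finite_subset_activated_iterate:
  assumes "finite B" and "B \<subseteq> activated V E \<tau> D"
  shows "\<exists>k. B \<subseteq> (spread_step V E \<tau> ^^ k) D"
  using assms
proof (induction B rule: finite_induct)
  case empty
  then show ?case by auto
next
  case (insert b B)
  then obtain k where k: "B \<subseteq> (spread_step V E \<tau> ^^ k) D" by auto
  from insert obtain j where j: "b \<in> (spread_step V E \<tau> ^^ j) D" unfolding activated_def by auto
  show ?case
    using k j spread_step_iterate_mono[of k "max k j" V E \<tau> D]
      spread_step_iterate_mono[of j "max k j" V E \<tau> D]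
    by (intro exI[of _ "max k j"]) auto
qed

lemma activated_closed:
  assumes sg: "simple_graph V E" and "w \<in> V"
    and "\<tau> w \<le> card {u \<in> activated V E \<tau> D. {u, w} \<in> E}"
  shows "w \<in> activated V E \<tau> D"
proof -
  let ?N = "{u \<in> activated V E \<tau> D. {u, w} \<in> E}"
  obtain k where k: "?N \<subseteq> (spread_step V E \<tau> ^^ k) D"
    using finite_subset_activated_iterate[OF finite_neighbours_in[OF sg]] by blast
  have "card ?N \<le> card {u \<in> (spread_step V E \<tau> ^^ k) D. {u, w} \<in> E}"
    using k by (intro card_mono finite_neighbours_in[OF sg]) blast
  then have "w \<in> (spread_step V E \<tau> ^^ Suc k) D"
    using assms(2,3) unfolding spread_step_def by auto
  then show ?thesis unfolding activated_def by blast
qed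

lemma is_dynamo_iff_activated:
  assumes sg: "simple_graph V E" and "D \<subseteq> V"
  shows "is_dynamo V E \<tau> D \<longleftrightarrow> V \<subseteq> activated V E \<tau> D"
proof
  assume "V \<subseteq> activated V E \<tau> D"
  moreover have "finite V" using sg unfolding simple_graph_def by blast
  ultimately obtain k where "V \<subseteq> (spread_step V E \<tau> ^^ k) D"
    using finite_subset_activated_iterate by blast
  with spread_step_iterate_subset[OF assms(2), where k=k and E=E and \<tau>=\<tau>]
  have "(spread_step V E \<tau> ^^ k) D = V" by blast
  then show "is_dynamo V E \<tau> D" using assms(2) unfolding is_dynamo_def by blast
next
  assume "is_dynamo V E \<tau> D"
  then show "V \<subseteq> activated V E \<tau> D" unfolding is_dynamo_def activated_def by blast
qed

text \<open>\<open>del_vertices E X\<close> is the edge set of \<open>F - X\<close>; once \<open>X\<close> is active, the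
  thresholds on \<open>F - X\<close> drop by \<open>deg_in E X\<close>.\<close>

definition del_vertices :: "'a set set \<Rightarrow> 'a set \<Rightarrow> 'a set set" where
  "del_vertices E X = {e \<in> E. e \<inter> X = {}}"

definition deg_in :: "'a set set \<Rightarrow> 'a set \<Rightarrow> 'a \<Rightarrow> nat" where
  "deg_in E X w = card {x \<in> X. {x, w} \<in> E}"

lemma del_vertices_subset: "del_vertices E X \<subseteq> E"
  unfolding del_vertices_def by auto

lemma del_vertices_edge_iff:
  "w \<notin> X \<Longrightarrow> {u, w} \<in> del_vertices E X \<longleftrightarrow> {u, w} \<in> E \<and> u \<notin> X"
  unfolding del_vertices_def by auto

lemma degree_del_vertices:
  assumes sg: "simple_graph V E" and w: "w \<notin> X"
  shows "degree E w = degree (del_vertices E X) w + deg_in E X w"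
proof -
  have "{u. {u, w} \<in> E} = {u. {u, w} \<in> del_vertices E X} \<union> {x \<in> X. {x, w} \<in> E}"
    using w by (auto simp: del_vertices_edge_iff)
  moreover have "finite {u. {u, w} \<in> del_vertices E X}"
    by (rule finite_subset[OF _ finite_neighbours[OF sg, of w]]) (auto simp: del_vertices_def)
  moreover have "{u. {u, w} \<in> del_vertices E X} \<inter> {x \<in> X. {x, w} \<in> E} = {}"
    using w by (auto simp: del_vertices_edge_iff)
  ultimately show ?thesis
    unfolding degree_def deg_in_def by (simp add: card_Un_disjoint finite_neighbours_in[OF sg])
qed

lemma deg_in_singleton: "deg_in E {v} w = (if {v, w} \<in> E then 1 else 0)"
proof -
  have "{x \<in> {v}. {x, w} \<in> E} = (if {v, w} \<in> E then {v} else {})" by auto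
  then show ?thesis unfolding deg_in_def by simp
qed

lemma forest_del_vertices:
  assumes "forest V E"
  shows "forest (V - X) (del_vertices E X)"
proof -
  have sg: "simple_graph V E" using assms unfolding forest_def by blast
  have "\<exists>u v. e = {u, v} \<and> u \<noteq> v \<and> u \<in> V - X \<and> v \<in> V - X" if e: "e \<in> del_vertices E X" for e
  proof -
    have "e \<in> E" and eX: "e \<inter> X = {}" using e unfolding del_vertices_def by auto
    then obtain u v where "e = {u, v}" "u \<noteq> v" "u \<in> V" "v \<in> V"
      using sg unfolding simple_graph_def by meson
    then show ?thesis using eX by auto
  qed
  then have "simple_graph (V - X) (del_vertices E X)"
    using sg unfolding simple_graph_def by auto
  moreover have "is_cycle V E cs" if "is_cycle (V - X) (del_vertices E X) cs" for cs
    using that del_vertices_subset[of E X] unfolding is_cycle_def by (meson Diff_subset subset_iff subset_trans)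
  ultimately show ?thesis using assms unfolding forest_def by blast
qed

lemma matching_del_vertices: "matching (del_vertices E X) M \<Longrightarrow> matching E M"
  unfolding matching_def using del_vertices_subset by (meson subset_trans)

lemma Union_matching_del_vertices:
  assumes "simple_graph V E" and "matching (del_vertices E X) M"
  shows "\<Union>M \<subseteq> V - X"
proof
  fix x assume "x \<in> \<Union>M"
  then obtain e where e: "e \<in> M" "x \<in> e" by blast
  then have "e \<in> E" "e \<inter> X = {}"
    using assms(2) unfolding matching_def del_vertices_def by auto
  then show "x \<in> V - X" using e simple_graph_edge_subset[OF assms(1)] by auto
qed

lemma matching_insert_del_vertices:
  assumes "e \<in> E" and "matching (del_vertices E e) M"
  shows "matching E (insert e M)"
proof -
  have "M \<subseteq> E" and disj: "\<forall>e'\<in>M. e' \<inter> e = {}"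
    using assms(2) unfolding matching_def del_vertices_def by auto
  then show ?thesis
    using assms unfolding matching_def by (metis Int_commute insert_iff insert_subset)
qed

lemma activated_by_subgraph_dynamo:
  assumes sg: "simple_graph V E" and "E' \<subseteq> E" and "V' \<subseteq> V"
    and dyn': "is_dynamo V' E' \<tau>' D'" and "D' \<subseteq> D"
    and A: "A \<subseteq> activated V E \<tau> D" "A \<inter> V' = {}"
    and thr: "\<forall>w\<in>V'. \<tau> w \<le> \<tau>' w + card {x \<in> A. {x, w} \<in> E}"
  shows "V' \<subseteq> activated V E \<tau> D"
proof -
  have "D' \<subseteq> V'" using dyn' unfolding is_dynamo_def by blast
  have "(spread_step V' E' \<tau>' ^^ k) D' \<subseteq> activated V E \<tau> D" for k
  proof (induction k)
    case 0
    then show ?case using \<open>D' \<subseteq> D\<close> activated_base[of D V E \<tau>] by auto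
  next
    case (Suc k)
    let ?T = "(spread_step V' E' \<tau>' ^^ k) D'"
    have TV': "?T \<subseteq> V'" using spread_step_iterate_subset[OF \<open>D' \<subseteq> V'\<close>] .
    have "w \<in> activated V E \<tau> D"
      if w: "w \<in> V'" "w \<notin> ?T" and le: "\<tau>' w \<le> card {u \<in> ?T. {u, w} \<in> E'}" for w
    proof -
      let ?P = "{u \<in> ?T. {u, w} \<in> E'}" and ?Q = "{x \<in> A. {x, w} \<in> E}"
      have fin: "finite ?P" "finite ?Q"
        using finite_neighbours_in[OF sg, of ?T w] finite_neighbours_in[OF sg, of A w] \<open>E' \<subseteq> E\<close>
        by (auto intro: finite_subset[rotated])
      have "\<tau> w \<le> card ?P + card ?Q" using thr w le by fastforce
      also have "\<dots> = card (?P \<union> ?Q)" using fin TV' A(2) by (subst card_Un_disjoint) auto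
      also have "\<dots> \<le> card {u \<in> activated V E \<tau> D. {u, w} \<in> E}"
        using Suc.IH \<open>E' \<subseteq> E\<close> A(1) by (intro card_mono finite_neighbours_in[OF sg]) auto
      finally show ?thesis using activated_closed[OF sg] w \<open>V' \<subseteq> V\<close> by blast
    qed
    then show ?case using Suc.IH unfolding spread_step_def by auto
  qed
  moreover obtain k where "(spread_step V' E' \<tau>' ^^ k) D' = V'"
    using dyn' unfolding is_dynamo_def by blast
  ultimately show ?thesis by metis
qed

lemma sum_degree_le_sum_threshold_del_vertices:
  assumes sg: "simple_graph V E" and U: "U \<subseteq> V - X"
    and sum: "(\<Sum>w\<in>U. degree (del_vertices E X) w) \<le> (\<Sum>w\<in>V - X. \<tau> w - deg_in E X w)"
    and pos: "\<forall>w\<in>U. 1 \<le> \<tau> w - deg_in E X w"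
  shows "(\<Sum>w\<in>U. degree E w) \<le> (\<Sum>w\<in>V - X. \<tau> w)"
proof -
  let ?c = "deg_in E X"
  have fin: "finite (V - X)" using sg unfolding simple_graph_def by blast
  have "(\<Sum>w\<in>U. degree E w) = (\<Sum>w\<in>U. degree (del_vertices E X) w + ?c w)"
    using U degree_del_vertices[OF sg] by (intro sum.cong) auto
  also have "\<dots> = (\<Sum>w\<in>U. degree (del_vertices E X) w) + (\<Sum>w\<in>U. ?c w)"
    by (rule sum.distrib)
  also have "\<dots> \<le> (\<Sum>w\<in>V - X. \<tau> w - ?c w) + (\<Sum>w\<in>U. ?c w)"
    using sum by simp
  also have "\<dots> = (\<Sum>w\<in>(V - X) - U. \<tau> w - ?c w) + (\<Sum>w\<in>U. \<tau> w - ?c w + ?c w)"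
    using sum.subset_diff[OF U fin] by (simp add: sum.distrib)
  also have "\<dots> \<le> (\<Sum>w\<in>(V - X) - U. \<tau> w) + (\<Sum>w\<in>U. \<tau> w)"
    using pos by (intro add_mono sum_mono) auto
  also have "\<dots> = (\<Sum>w\<in>V - X. \<tau> w)"
    by (rule sum.subset_diff[OF U fin, symmetric])
  finally show ?thesis .
qed

definition is_path :: "'a set \<Rightarrow> 'a set set \<Rightarrow> 'a list \<Rightarrow> bool" where
  "is_path V E xs \<longleftrightarrow> xs \<noteq> [] \<and> distinct xs \<and> set xs \<subseteq> V \<and>
     (\<forall>i. Suc i < length xs \<longrightarrow> {xs ! i, xs ! Suc i} \<in> E)"

lemma is_cycle_take_path:
  assumes p: "is_path V E xs" and i: "2 \<le> i" "i < length xs" and e: "{xs ! i, xs ! 0} \<in> E"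
  shows "is_cycle V E (take (Suc i) xs)"
  unfolding is_cycle_def
proof (intro conjI allI impI)
  let ?cs = "take (Suc i) xs"
  have len: "length ?cs = Suc i" using i by simp
  show "3 \<le> length ?cs" "distinct ?cs" "set ?cs \<subseteq> V"
    using len i p set_take_subset[of "Suc i" xs] unfolding is_path_def by auto
  fix j assume j: "j < length ?cs"
  show "{?cs ! j, ?cs ! ((j + 1) mod length ?cs)} \<in> E"
  proof (cases "j = i")
    case True
    then show ?thesis using e len by simp
  next
    case False
    then have "Suc j < length ?cs" using j len by simp
    then show ?thesis using p i unfolding is_path_def by simp
  qed
qed

lemma forest_path_extend:
  assumes f: "forest V E" and p: "is_path V E xs" and deg: "\<forall>v\<in>V. 2 \<le> degree E v"
  shows "\<exists>y. is_path V E (y # xs)"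
proof -
  have sg: "simple_graph V E" using f unfolding forest_def by blast
  let ?x = "xs ! 0"
  have "?x \<in> V" using p unfolding is_path_def by (simp add: subset_iff)
  then have two: "2 \<le> card {u. {u, ?x} \<in> E}" using deg unfolding degree_def by blast
  have "\<not> {u. {u, ?x} \<in> E} \<subseteq> {xs ! 1}"
  proof
    assume "{u. {u, ?x} \<in> E} \<subseteq> {xs ! 1}"
    from card_mono[OF _ this] two show False by simp
  qed
  then obtain y where y: "{y, ?x} \<in> E" and y1: "y \<noteq> xs ! 1" by blast
  have "y \<notin> set xs"
  proof
    assume "y \<in> set xs"
    then obtain i where i: "i < length xs" "xs ! i = y" by (metis in_set_conv_nth)
    moreover have "i \<noteq> 0" using i simple_graph_edgeD(1)[OF sg y] by (cases i) auto
    moreover have "i \<noteq> 1" using i y1 by auto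
    ultimately have "is_cycle V E (take (Suc i) xs)"
      using y by (intro is_cycle_take_path[OF p]) auto
    then show False using f unfolding forest_def by blast
  qed
  moreover have "y \<in> V" using simple_graph_edgeD(2)[OF sg y] .
  ultimately have "is_path V E (y # xs)"
    unfolding is_path_def
  proof (intro conjI allI impI)
    fix i assume i: "Suc i < length (y # xs)"
    show "{(y # xs) ! i, (y # xs) ! Suc i} \<in> E"
    proof (cases i)
      case 0
      then show ?thesis using y by simp
    next
      case (Suc j)
      then show ?thesis using p i unfolding is_path_def by auto
    qed
  qed (use p in \<open>auto simp: is_path_def\<close>)
  then show ?thesis ..
qed

lemma forest_has_leaf:
  assumes f: "forest V E" and "V \<noteq> {}" and deg: "\<forall>v\<in>V. 1 \<le> degree E v"
  shows "\<exists>v\<in>V. degree E v = 1"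
proof (rule ccontr)
  assume "\<not> ?thesis"
  then have deg2: "\<forall>v\<in>V. 2 \<le> degree E v" using deg by fastforce
  obtain v where "v \<in> V" using \<open>V \<noteq> {}\<close> by blast
  have "\<exists>xs. is_path V E xs \<and> length xs = Suc n" for n
  proof (induction n)
    case 0
    have "is_path V E [v]" using \<open>v \<in> V\<close> unfolding is_path_def by simp
    then show ?case by auto
  next
    case (Suc n)
    then show ?case using forest_path_extend[OF f _ deg2] by fastforce
  qed
  then obtain xs where xs: "is_path V E xs" "length xs = Suc (card V)" by blast
  have "finite V" using f unfolding forest_def simple_graph_def by blast
  then have "card (set xs) \<le> card V" using xs(1) card_mono unfolding is_path_def by blast
  then show False using xs distinct_card unfolding is_path_def by fastforce
qed

text \<open>The last conjunct is what keeps the induction going: it makes the truncated subtraction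
  in the lowered thresholds \<open>\<tau> w - deg_in E X w\<close> exact on saturated vertices.\<close>

definition has_matched_dynamo :: "'a set \<Rightarrow> 'a set set \<Rightarrow> ('a \<Rightarrow> nat) \<Rightarrow> bool" where
  "has_matched_dynamo V E \<tau> \<longleftrightarrow> (\<exists>M D. matching E M \<and> is_dynamo V E \<tau> D \<and> card D \<le> card M \<and>
     (\<Sum>w\<in>\<Union>M. degree E w) \<le> (\<Sum>v\<in>V. \<tau> v) \<and> (\<forall>w\<in>\<Union>M. 1 \<le> \<tau> w))"

lemma threshold_assignment_del_vertices:
  assumes "simple_graph V E" and "threshold_assignment V E \<tau>"
  shows "threshold_assignment (V - X) (del_vertices E X) (\<lambda>w. \<tau> w - deg_in E X w)"
  unfolding threshold_assignment_def
proof
  fix w assume w: "w \<in> V - X"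
  then have "degree E w = degree (del_vertices E X) w + deg_in E X w"
    by (intro degree_del_vertices[OF assms(1)]) auto
  then show "\<tau> w - deg_in E X w \<le> degree (del_vertices E X) w"
    using assms(2) w unfolding threshold_assignment_def by fastforce
qed

lemma threshold_assignment_del_leaf:
  assumes sg: "simple_graph V E" and thr: "threshold_assignment V E \<tau>"
    and leaf: "{w. {w, v} \<in> E} = {u}" and u: "\<tau> u < degree E u"
  shows "threshold_assignment (V - {v}) (del_vertices E {v}) \<tau>"
  unfolding threshold_assignment_def
proof
  fix w assume w: "w \<in> V - {v}"
  have deg: "degree E w = degree (del_vertices E {v}) w + deg_in E {v} w"
    using w by (intro degree_del_vertices[OF sg]) auto
  have "\<tau> w \<le> degree E w" using thr w unfolding threshold_assignment_def by blast
  show "\<tau> w \<le> degree (del_vertices E {v}) w"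
  proof (cases "w = u")
    case True
    then show ?thesis using deg u deg_in_singleton[of E v w] by (simp split: if_splits)
  next
    case False
    have "w \<notin> {w. {w, v} \<in> E}" using leaf False by simp
    then have "{v, w} \<notin> E" by (simp add: insert_commute)
    then show ?thesis using deg \<open>\<tau> w \<le> degree E w\<close> deg_in_singleton[of E v w] by simp
  qed
qed

lemma lift_matched_dynamo_del_vertices:
  assumes sg: "simple_graph V E" and "D \<subseteq> V"
    and M: "matching (del_vertices E X) M"
    and D': "is_dynamo (V - X) (del_vertices E X) (\<lambda>w. \<tau> w - deg_in E X w) D'" "D' \<subseteq> D"
    and X: "X \<subseteq> activated V E \<tau> D"
    and sum: "(\<Sum>w\<in>\<Union>M. degree (del_vertices E X) w) \<le> (\<Sum>w\<in>V - X. \<tau> w - deg_in E X w)"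
    and pos: "\<forall>w\<in>\<Union>M. 1 \<le> \<tau> w - deg_in E X w"
  shows "is_dynamo V E \<tau> D" and "(\<Sum>w\<in>\<Union>M. degree E w) \<le> (\<Sum>w\<in>V - X. \<tau> w)"
    and "\<forall>w\<in>\<Union>M. 1 \<le> \<tau> w"
proof -
  have "V - X \<subseteq> activated V E \<tau> D"
  proof (rule activated_by_subgraph_dynamo[OF sg del_vertices_subset Diff_subset D' X])
    show "X \<inter> (V - X) = {}" by blast
    show "\<forall>w\<in>V - X. \<tau> w \<le> \<tau> w - deg_in E X w + card {x \<in> X. {x, w} \<in> E}"
      unfolding deg_in_def by (intro ballI) linarith
  qed
  then show "is_dynamo V E \<tau> D" using X is_dynamo_iff_activated[OF sg \<open>D \<subseteq> V\<close>] by blast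
  show "(\<Sum>w\<in>\<Union>M. degree E w) \<le> (\<Sum>w\<in>V - X. \<tau> w)"
    by (rule sum_degree_le_sum_threshold_del_vertices[OF sg Union_matching_del_vertices[OF sg M] sum pos])
  show "\<forall>w\<in>\<Union>M. 1 \<le> \<tau> w" using pos by fastforce
qed

lemma has_matched_dynamo_zero_threshold:
  assumes sg: "simple_graph V E" and z: "z \<in> V" "\<tau> z = 0"
    and reduced: "has_matched_dynamo (V - {z}) (del_vertices E {z}) (\<lambda>w. \<tau> w - deg_in E {z} w)"
  shows "has_matched_dynamo V E \<tau>"
proof -
  obtain M D where M: "matching (del_vertices E {z}) M"
    and D: "is_dynamo (V - {z}) (del_vertices E {z}) (\<lambda>w. \<tau> w - deg_in E {z} w) D"
    and card: "card D \<le> card M"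
    and sum: "(\<Sum>w\<in>\<Union>M. degree (del_vertices E {z}) w) \<le> (\<Sum>w\<in>V - {z}. \<tau> w - deg_in E {z} w)"
    and pos: "\<forall>w\<in>\<Union>M. 1 \<le> \<tau> w - deg_in E {z} w"
    using reduced unfolding has_matched_dynamo_def by blast
  have DV: "D \<subseteq> V" using D unfolding is_dynamo_def by blast
  have "{z} \<subseteq> activated V E \<tau> D" using activated_closed[OF sg z(1)] z(2) by simp
  note lift = lift_matched_dynamo_del_vertices[OF sg DV M D order_refl this sum pos]
  have "(\<Sum>w\<in>V - {z}. \<tau> w) \<le> (\<Sum>w\<in>V. \<tau> w)"
    using sg unfolding simple_graph_def by (intro sum_mono2) auto
  then show ?thesis
    unfolding has_matched_dynamo_def using matching_del_vertices[OF M] lift card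
    by (meson order_trans)
qed

lemma deg_in_leaf:
  assumes "{w. {w, v} \<in> E} = {u}"
  shows "deg_in E {v} w = (if w = u then 1 else 0)"
proof -
  have "{v, w} \<in> E \<longleftrightarrow> w \<in> {w. {w, v} \<in> E}" by (simp add: insert_commute)
  then show ?thesis unfolding deg_in_singleton assms by simp
qed

lemma has_matched_dynamo_del_leaf:
  assumes sg: "simple_graph V E" and v: "v \<in> V" "\<tau> v = 1" and leaf: "{w. {w, v} \<in> E} = {u}"
    and reduced: "has_matched_dynamo (V - {v}) (del_vertices E {v}) \<tau>"
  shows "has_matched_dynamo V E \<tau>"
proof -
  obtain M D where M: "matching (del_vertices E {v}) M"
    and D: "is_dynamo (V - {v}) (del_vertices E {v}) \<tau> D" and card: "card D \<le> card M"
    and sum: "(\<Sum>w\<in>\<Union>M. degree (del_vertices E {v}) w) \<le> (\<Sum>w\<in>V - {v}. \<tau> w)"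
    and pos: "\<forall>w\<in>\<Union>M. 1 \<le> \<tau> w"
    using reduced unfolding has_matched_dynamo_def by blast
  have "u \<in> {w. {w, v} \<in> E}" using leaf by simp
  then have uv: "{u, v} \<in> E" by simp
  have DV: "D \<subseteq> V" using D unfolding is_dynamo_def by blast
  have act: "V - {v} \<subseteq> activated V E \<tau> D"
    by (rule activated_by_subgraph_dynamo[OF sg del_vertices_subset Diff_subset D order_refl,
          of "{}"]) simp_all
  then have "u \<in> activated V E \<tau> D" using simple_graph_edgeD[OF sg uv] by blast
  then have "{u} \<subseteq> {x \<in> activated V E \<tau> D. {x, v} \<in> E}" using uv by blast
  then have "card {u} \<le> card {x \<in> activated V E \<tau> D. {x, v} \<in> E}"
    by (intro card_mono finite_neighbours_in[OF sg])
  then have "\<tau> v \<le> card {x \<in> activated V E \<tau> D. {x, v} \<in> E}" using v(2) by simp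
  then have "v \<in> activated V E \<tau> D" by (rule activated_closed[OF sg v(1)])
  with act DV have dyn: "is_dynamo V E \<tau> D" using is_dynamo_iff_activated[OF sg DV] by blast
  have U: "\<Union>M \<subseteq> V - {v}" by (rule Union_matching_del_vertices[OF sg M])
  have "(\<Sum>w\<in>\<Union>M. degree E w) = (\<Sum>w\<in>\<Union>M. degree (del_vertices E {v}) w + deg_in E {v} w)"
  proof (rule sum.cong[OF refl])
    fix w assume "w \<in> \<Union>M"
    then have "w \<notin> {v}" using U by blast
    then show "degree E w = degree (del_vertices E {v}) w + deg_in E {v} w"
      by (rule degree_del_vertices[OF sg])
  qed
  also have "\<dots> = (\<Sum>w\<in>\<Union>M. degree (del_vertices E {v}) w) + (\<Sum>w\<in>\<Union>M. deg_in E {v} w)"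
    by (rule sum.distrib)
  also have "\<dots> \<le> (\<Sum>w\<in>V - {v}. \<tau> w) + \<tau> v"
  proof -
    have "(\<Sum>w\<in>\<Union>M. deg_in E {v} w) \<le> 1"
      using sg U unfolding deg_in_leaf[OF leaf] simple_graph_def by (simp add: finite_subset)
    then show ?thesis using sum v(2) by linarith
  qed
  also have "\<dots> = (\<Sum>w\<in>V. \<tau> w)"
    using sum.remove[OF _ v(1), of \<tau>] sg unfolding simple_graph_def by simp
  finally show ?thesis
    unfolding has_matched_dynamo_def using matching_del_vertices[OF M] dyn card pos by blast
qed

lemma has_matched_dynamo_del_leaf_edge:
  assumes sg: "simple_graph V E" and v: "v \<in> V" "\<tau> v = 1" and leaf: "{w. {w, v} \<in> E} = {u}"
    and u: "\<tau> u = degree E u"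
    and reduced: "has_matched_dynamo (V - {u, v}) (del_vertices E {u, v}) (\<lambda>w. \<tau> w - deg_in E {u, v} w)"
  shows "has_matched_dynamo V E \<tau>"
proof -
  obtain M D where M: "matching (del_vertices E {u, v}) M"
    and D: "is_dynamo (V - {u, v}) (del_vertices E {u, v}) (\<lambda>w. \<tau> w - deg_in E {u, v} w) D"
    and card: "card D \<le> card M"
    and sum: "(\<Sum>w\<in>\<Union>M. degree (del_vertices E {u, v}) w) \<le> (\<Sum>w\<in>V - {u, v}. \<tau> w - deg_in E {u, v} w)"
    and pos: "\<forall>w\<in>\<Union>M. 1 \<le> \<tau> w - deg_in E {u, v} w"
    using reduced unfolding has_matched_dynamo_def by blast
  have fin: "finite V" using sg unfolding simple_graph_def by blast
  have "u \<in> {w. {w, v} \<in> E}" using leaf by simp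
  then have uv: "{u, v} \<in> E" by simp
  have "u \<noteq> v" "u \<in> V" using simple_graph_edgeD[OF sg uv] by blast+
  let ?D = "insert u D" and ?M = "insert {u, v} M"
  have DV: "?D \<subseteq> V" using D \<open>u \<in> V\<close> unfolding is_dynamo_def by blast
  have u_act: "u \<in> activated V E \<tau> ?D" using activated_base[of ?D V E \<tau>] by blast
  then have "card {u} \<le> card {x \<in> activated V E \<tau> ?D. {x, v} \<in> E}"
    using uv by (intro card_mono finite_neighbours_in[OF sg]) auto
  then have "v \<in> activated V E \<tau> ?D" using activated_closed[OF sg v(1)] v(2) by simp
  with u_act have "{u, v} \<subseteq> activated V E \<tau> ?D" by blast
  note lift = lift_matched_dynamo_del_vertices[OF sg DV M D subset_insertI this sum pos]
  have "M \<subseteq> del_vertices E {u, v}" using M unfolding matching_def by blast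
  then have finM: "finite M" and new: "{u, v} \<notin> M"
    using simple_graph_finite_edges[OF sg] del_vertices_subset[of E "{u, v}"]
    by (auto simp: del_vertices_def intro: finite_subset)
  have "finite D" using DV fin by (meson finite_subset subset_insertI2 subset_refl)
  then have card': "card ?D \<le> card ?M"
    using card finM new by (simp add: card_insert_if)
  have U: "\<Union>M \<subseteq> V - {u, v}" by (rule Union_matching_del_vertices[OF sg M])
  have "degree E v = 1" unfolding degree_def leaf by simp
  moreover have "finite (\<Union>M)" using U fin by (meson finite_Diff finite_subset)
  ultimately have "(\<Sum>w\<in>\<Union>?M. degree E w) = \<tau> u + \<tau> v + (\<Sum>w\<in>\<Union>M. degree E w)"
    using U \<open>u \<noteq> v\<close> u v(2) by (subst Union_insert, subst sum.union_disjoint) auto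
  also have "\<dots> \<le> \<tau> u + \<tau> v + (\<Sum>w\<in>V - {u, v}. \<tau> w)" using lift(2) by simp
  also have "\<dots> = (\<Sum>w\<in>V. \<tau> w)"
    using sum.subset_diff[of "{u, v}" V \<tau>] fin \<open>u \<noteq> v\<close> \<open>u \<in> V\<close> v(1) by simp
  finally have sum': "(\<Sum>w\<in>\<Union>?M. degree E w) \<le> (\<Sum>w\<in>V. \<tau> w)" .
  have "card {v} \<le> degree E u"
    unfolding degree_def using uv finite_neighbours[OF sg, of u]
    by (intro card_mono) (auto simp: insert_commute)
  then have "\<forall>w\<in>\<Union>?M. 1 \<le> \<tau> w" using lift(3) u v(2) by auto
  moreover have "matching E ?M" by (rule matching_insert_del_vertices[OF uv M])
  ultimately show ?thesis
    unfolding has_matched_dynamo_def using lift(1) card' sum' by blast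
qed

lemma has_matched_dynamo_empty: "has_matched_dynamo {} E \<tau>"
proof -
  have "matching E {}" unfolding matching_def by blast
  moreover have "is_dynamo {} E \<tau> {}" unfolding is_dynamo_def by (auto intro: exI[of _ 0])
  ultimately show ?thesis unfolding has_matched_dynamo_def by fastforce
qed

theorem forest_has_matched_dynamo:
  assumes "forest V E" and "threshold_assignment V E \<tau>"
  shows "has_matched_dynamo V E \<tau>"
  using assms
proof (induction "card V" arbitrary: V E \<tau> rule: less_induct)
  case less
  have sg: "simple_graph V E" using less.prems(1) unfolding forest_def by blast
  have fin: "finite V" using sg unfolding simple_graph_def by blast
  have IH: "has_matched_dynamo (V - X) (del_vertices E X) \<tau>'"
    if "x \<in> X" "x \<in> V" "threshold_assignment (V - X) (del_vertices E X) \<tau>'" for x X \<tau>'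
  proof (rule less.hyps[OF _ forest_del_vertices[OF less.prems(1)] that(3)])
    show "card (V - X) < card V" using that(1,2) fin by (intro psubset_card_mono) auto
  qed
  have thr: "\<forall>v\<in>V. \<tau> v \<le> degree E v" using less.prems(2) unfolding threshold_assignment_def .
  consider "V = {}" | z where "z \<in> V" "\<tau> z = 0" | "V \<noteq> {}" "\<forall>z\<in>V. 1 \<le> \<tau> z"
    by (metis less_one not_le)
  then show ?case
  proof cases
    case 1
    then show ?thesis using has_matched_dynamo_empty by simp
  next
    case (2 z)
    then show ?thesis
      using IH[of z "{z}"] threshold_assignment_del_vertices[OF sg less.prems(2)]
      by (intro has_matched_dynamo_zero_threshold[OF sg]) auto
  next
    case 3
    then have "\<forall>z\<in>V. 1 \<le> degree E z" using thr by (meson order_trans)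
    then obtain v where v: "v \<in> V" "degree E v = 1"
      using forest_has_leaf[OF less.prems(1) \<open>V \<noteq> {}\<close>] by blast
    have tv: "\<tau> v = 1" using 3(2) thr v by (metis le_antisym)
    obtain u where leaf: "{w. {w, v} \<in> E} = {u}"
      using v(2) unfolding degree_def by (rule card_1_singletonE)
    show ?thesis
    proof (cases "\<tau> u = degree E u")
      case True
      then show ?thesis
        using IH[of v "{u, v}"] threshold_assignment_del_vertices[OF sg less.prems(2)] v(1)
        by (intro has_matched_dynamo_del_leaf_edge[where \<tau>=\<tau>, OF sg v(1) tv leaf]) auto
    next
      case False
      have "u \<in> {w. {w, v} \<in> E}" using leaf by simp
      then have "{u, v} \<in> E" by simp
      then have "u \<in> V" by (rule simple_graph_edgeD(2)[OF sg])
      with False have "\<tau> u < degree E u" using thr by (meson le_neq_implies_less)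
      then show ?thesis
        using IH[of v "{v}"] threshold_assignment_del_leaf[OF sg less.prems(2) leaf] v(1)
        by (intro has_matched_dynamo_del_leaf[where \<tau>=\<tau>, OF sg v(1) tv leaf]) auto
    qed
  qed
qed

lemma full_threshold_not_activated:
  assumes sg: "simple_graph V E" and x: "\<tau> x = degree E x" "x \<notin> T"
    and y: "{y, x} \<in> E" "y \<notin> T"
  shows "x \<notin> spread_step V E \<tau> T"
proof
  assume "x \<in> spread_step V E \<tau> T"
  then have "card {u. {u, x} \<in> E} \<le> card {u \<in> T. {u, x} \<in> E}"
    using x unfolding spread_step_def degree_def by auto
  then have "{u \<in> T. {u, x} \<in> E} = {u. {u, x} \<in> E}"
    by (intro card_seteq finite_neighbours[OF sg]) auto
  then show False using y by blast
qed

lemma card_matching_le_dynamo: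
  assumes sg: "simple_graph V E" and M: "matching E M"
    and full: "\<forall>w\<in>\<Union>M. \<tau> w = degree E w" and D: "is_dynamo V E \<tau> D"
  shows "card M \<le> card D"
proof -
  obtain k where k: "(spread_step V E \<tau> ^^ k) D = V" using D unfolding is_dynamo_def by blast
  have hit: "e \<inter> D \<noteq> {}" if e: "e \<in> M" for e
  proof
    assume eD: "e \<inter> D = {}"
    have "e \<in> E" using e M unfolding matching_def by blast
    then obtain a b where ab: "e = {a, b}" "a \<in> V"
      using sg unfolding simple_graph_def by blast
    then have edges: "{b, a} \<in> E" "{a, b} \<in> E" using \<open>e \<in> E\<close> by (auto simp: insert_commute)
    have ta: "\<tau> a = degree E a" and tb: "\<tau> b = degree E b" using full e ab by auto
    have "a \<notin> (spread_step V E \<tau> ^^ j) D \<and> b \<notin> (spread_step V E \<tau> ^^ j) D" for j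
    proof (induction j)
      case 0
      then show ?case using eD ab by auto
    next
      case (Suc j)
      then show ?case
        using full_threshold_not_activated[where \<tau>=\<tau>, OF sg ta _ edges(1)]
          full_threshold_not_activated[where \<tau>=\<tau>, OF sg tb _ edges(2)]
        by simp
    qed
    then show False using k ab by blast
  qed
  define pick where "pick e = (SOME x. x \<in> e \<inter> D)" for e
  have pick: "pick e \<in> e \<inter> D" if "e \<in> M" for e
    unfolding pick_def using hit[OF that] by (metis all_not_in_conv someI_ex)
  have "inj_on pick M"
  proof (rule inj_onI)
    fix e1 e2 assume e: "e1 \<in> M" "e2 \<in> M" and eq: "pick e1 = pick e2"
    show "e1 = e2"
    proof (rule ccontr)
      assume "e1 \<noteq> e2"
      then have "e1 \<inter> e2 = {}" using M e unfolding matching_def by blast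
      then show False using pick[OF e(1)] pick[OF e(2)] eq by auto
    qed
  qed
  moreover have "pick ` M \<subseteq> D" using pick by blast
  moreover have "finite D"
    using D sg finite_subset unfolding is_dynamo_def simple_graph_def by blast
  ultimately show ?thesis by (meson card_inj_on_le)
qed

lemma finite_dynamo_sizes:
  assumes "simple_graph V E"
  shows "finite {card D | D. is_dynamo V E \<tau> D}"
proof (rule finite_subset)
  show "{card D | D. is_dynamo V E \<tau> D} \<subseteq> {..card V}"
    using assms card_mono unfolding is_dynamo_def simple_graph_def by fastforce
qed simp

lemma is_dynamo_vertices: "is_dynamo V E \<tau> V"
  unfolding is_dynamo_def by (auto intro: exI[of _ 0])

lemma dyn_le_card_dynamo: "simple_graph V E \<Longrightarrow> is_dynamo V E \<tau> D \<Longrightarrow> dyn V E \<tau> \<le> card D"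
  unfolding dyn_def by (rule Min_le) (auto simp: finite_dynamo_sizes)

lemma le_dynI:
  assumes "simple_graph V E" and "\<And>D. is_dynamo V E \<tau> D \<Longrightarrow> n \<le> card D"
  shows "n \<le> dyn V E \<tau>"
  unfolding dyn_def using assms is_dynamo_vertices[of V E \<tau>] finite_dynamo_sizes[OF assms(1)]
  by (subst Min_ge_iff) auto

lemma Ldyn_eqI:
  assumes sg: "simple_graph V E" and "threshold_assignment V E \<tau>" "avg_threshold V \<tau> \<le> t"
    and "\<And>\<sigma>. threshold_assignment V E \<sigma> \<Longrightarrow> avg_threshold V \<sigma> \<le> t \<Longrightarrow> dyn V E \<sigma> \<le> dyn V E \<tau>"
  shows "Ldyn V E t = dyn V E \<tau>"
proof -
  let ?L = "{dyn V E \<sigma> | \<sigma>. threshold_assignment V E \<sigma> \<and> avg_threshold V \<sigma> \<le> t}"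
  have "?L \<subseteq> {..card V}"
    using dyn_le_card_dynamo[OF sg is_dynamo_vertices] by auto
  then have "finite ?L" by (rule finite_subset) simp
  then show ?thesis
    unfolding Ldyn_def using assms by (intro Max_eqI) auto
qed

lemma avg_threshold_le_iff:
  assumes "finite V" and "0 < t"
  shows "avg_threshold V \<tau> \<le> t \<longleftrightarrow> real (\<Sum>v\<in>V. \<tau> v) \<le> t * real (card V)"
proof (cases "V = {}")
  case False
  then have "0 < real (card V)" using assms(1) by (simp add: card_gt_0_iff)
  then show ?thesis unfolding avg_threshold_def by (simp add: pos_divide_le_eq)
qed (use assms in \<open>simp add: avg_threshold_def\<close>)

lemma exists_max_card_matching_within_budget:
  assumes "finite E" and "0 \<le> B"
  shows "\<exists>M. matching E M \<and> real (\<Sum>w\<in>\<Union>M. degree E w) \<le> B \<and>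
    (\<forall>M'. matching E M' \<and> real (\<Sum>w\<in>\<Union>M'. degree E w) \<le> B \<longrightarrow> card M' \<le> card M)"
proof -
  let ?P = "\<lambda>M. matching E M \<and> real (\<Sum>w\<in>\<Union>M. degree E w) \<le> B"
  have "?P {}" using assms(2) unfolding matching_def by simp
  moreover have "\<forall>M. ?P M \<longrightarrow> card M < Suc (card E)"
    using assms(1) card_mono unfolding matching_def by (metis le_imp_less_Suc)
  ultimately show ?thesis using ex_has_greatest_nat[of ?P "{}" card] by blast
qed

lemma dyn_le_card_max_budget_matching:
  assumes f: "forest V E" and "0 < t"
    and \<sigma>: "threshold_assignment V E \<sigma>" "avg_threshold V \<sigma> \<le> t"
    and max: "\<And>M'. matching E M' \<Longrightarrow> real (\<Sum>w\<in>\<Union>M'. degree E w) \<le> t * card V \<Longrightarrow>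
      card M' \<le> card M"
  shows "dyn V E \<sigma> \<le> card M"
proof -
  have sg: "simple_graph V E" and fin: "finite V"
    using f unfolding forest_def simple_graph_def by blast+
  obtain M' D where "matching E M'" "is_dynamo V E \<sigma> D" "card D \<le> card M'"
    "(\<Sum>w\<in>\<Union>M'. degree E w) \<le> (\<Sum>v\<in>V. \<sigma> v)"
    using forest_has_matched_dynamo[OF f \<sigma>(1)] unfolding has_matched_dynamo_def by blast
  moreover have "real (\<Sum>v\<in>V. \<sigma> v) \<le> t * card V"
    using \<sigma>(2) avg_threshold_le_iff[OF fin \<open>0 < t\<close>] by blast
  ultimately show ?thesis using max dyn_le_card_dynamo[OF sg] by (meson of_nat_le_iff order_trans)
qed

theorem proposition6:
  fixes V :: "'a set" and E :: "'a set set" and t :: real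
  assumes "forest V E" and "t > 0"
  shows "\<exists>M. matching E M \<and>
     (let \<tau> = (\<lambda>w. if w \<in> \<Union>M then degree E w else 0) in
        avg_threshold V \<tau> \<le> t \<and> Ldyn V E t = dyn V E \<tau> \<and> dyn V E \<tau> = card M)"
proof -
  have sg: "simple_graph V E" and fin: "finite V"
    using assms(1) unfolding forest_def simple_graph_def by blast+
  obtain M where M: "matching E M" and budget: "real (\<Sum>w\<in>\<Union>M. degree E w) \<le> t * card V"
    and max: "\<And>M'. matching E M' \<Longrightarrow> real (\<Sum>w\<in>\<Union>M'. degree E w) \<le> t * card V \<Longrightarrow>
      card M' \<le> card M"
    using exists_max_card_matching_within_budget[OF simple_graph_finite_edges[OF sg], of "t * card V"]
      assms(2) by auto
  define \<tau> where "\<tau> w = (if w \<in> \<Union>M then degree E w else 0)" for w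
  have "\<Union>M \<subseteq> V" using M simple_graph_edge_subset[OF sg] unfolding matching_def by blast
  then have sum_\<tau>: "(\<Sum>v\<in>V. \<tau> v) = (\<Sum>w\<in>\<Union>M. degree E w)"
    unfolding \<tau>_def sum.inter_restrict[OF fin, symmetric] by (simp add: Int_absorb1)
  have feasible: "threshold_assignment V E \<tau>" "avg_threshold V \<tau> \<le> t"
    unfolding avg_threshold_le_iff[OF fin assms(2)] sum_\<tau> using budget
    by (auto simp: threshold_assignment_def \<tau>_def)
  have upper: "dyn V E \<sigma> \<le> card M"
    if "threshold_assignment V E \<sigma>" "avg_threshold V \<sigma> \<le> t" for \<sigma>
    using dyn_le_card_max_budget_matching[OF assms that max] .
  have "\<forall>w\<in>\<Union>M. \<tau> w = degree E w" unfolding \<tau>_def by simp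
  then have lower: "card M \<le> dyn V E \<tau>"
    using card_matching_le_dynamo[OF sg M] by (intro le_dynI[OF sg]) blast
  have "Ldyn V E t = dyn V E \<tau>"
    using Ldyn_eqI[OF sg feasible] upper lower by (meson order_trans)
  moreover have "dyn V E \<tau> = card M" using upper[OF feasible] lower by simp
  ultimately show ?thesis using M feasible(2) unfolding \<tau>_def Let_def by (intro exI[of _ M]) simp
qed

end
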